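(* Let $q>0$, $q\ne1$, $\nu\ne0$ real. Let $\phi:(\mathbb{R}\setminus\{0\})\times\mathbb{R}\to\mathbb{R}$ be differentiable in $t$, nowhere zero, and satisfy the $q$-heat equation $\partial_t\phi(x,t)=\nu D_x^2\phi(x,t)$. Define $u(x,t)=-2\nu\,\frac{D_x\phi(x,t)}{\phi(x,t)}$. Then for all $x\ne0$ and $t$, $$\partial_tu(x,t)-\nu D_x^2u(x,t)=\tfrac12\,u(x,t)\big[(1-M_q^x)D_xu\big](x,t)-\tfrac12 D_x\big(u(qx,t)u(x,t)\big)+\frac{1}{4\nu}\big[u(q^2x,t)-u(x,t)\big]u(qx,t)u(x,t).$$
   Context: $D_x$ is the $q$-derivative in $x$ at fixed $t$: $D_xf(x,t)=\frac{f(qx,t)-f(x,t)}{(q-1)x}$, $D_x^2=D_x\circ D_x$; $\partial_t$ is the ordinary time derivative. $M_q^x$ is the dilation operator $(M_q^xf)(x,t)=f(qx,t)$, so $[(1-M_q^x)D_xu](x,t)=(D_xu)(x,t)-(D_xu)(qx,t)$. *)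

theory Defs
  imports Complex_Main
begin

definition qD :: "real \<Rightarrow> (real \<Rightarrow> real) \<Rightarrow> real \<Rightarrow> real" where
  "qD q f x = (f (q * x) - f x) / ((q - 1) * x)"

end

theory Submission
  imports Defs
begin

text \<open>For fixed \<open>x\<close> the q-derivative only
  involves the values at \<open>x\<close> and \<open>q * x\<close>, so it commutes with \<open>\<partial>\<^sub>t\<close>; the quotient rule then
  expresses \<open>\<partial>\<^sub>t u\<close> through the heat equation, i.e. through \<open>\<phi>\<close> at \<open>x, q x, q\<^sup>2 x, q\<^sup>3 x\<close>,
  and the claimed Burgers-type equation becomes a rational identity in these four values.\<close>

lemma qD_has_real_derivative:
  assumes "((\<lambda>s. f x s) has_real_derivative f' x) (at t)"
    and "((\<lambda>s. f (q * x) s) has_real_derivative f' (q * x)) (at t)"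
  shows "((\<lambda>s. qD q (\<lambda>y. f y s) x) has_real_derivative qD q f' x) (at t)"
  unfolding qD_def using DERIV_cdivide[OF DERIV_diff[OF assms(2,1)]] .

lemma qD_div_has_real_derivative:
  assumes "((\<lambda>s. f x s) has_real_derivative f' x) (at t)"
    and "((\<lambda>s. f (q * x) s) has_real_derivative f' (q * x)) (at t)"
    and "f x t \<noteq> 0"
  shows "((\<lambda>s. qD q (\<lambda>y. f y s) x / f x s) has_real_derivative
           (qD q f' x * f x t - qD q (\<lambda>y. f y t) x * f' x) / (f x t)\<^sup>2) (at t)"
  using DERIV_divide[OF qD_has_real_derivative[OF assms(1,2)] assms(1,3)]
  by (simp add: power2_eq_square)

lemma hopf_cole_q_identity:
  fixes q \<nu> x :: real and f :: "real \<Rightarrow> real"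
  assumes "q \<noteq> 0" "q \<noteq> 1" "\<nu> \<noteq> 0" "x \<noteq> 0"
    and f_nz: "\<And>y. y \<noteq> 0 \<Longrightarrow> f y \<noteq> 0"
  defines "U \<equiv> \<lambda>y. - 2 * \<nu> * qD q f y / f y"
  shows "- 2 * \<nu> * (qD q (\<lambda>y. \<nu> * qD q (qD q f) y) x * f x - qD q f x * (\<nu> * qD q (qD q f) x))
           / (f x)\<^sup>2
       = \<nu> * qD q (qD q U) x
         + 1/2 * U x * (qD q U x - qD q U (q * x))
         - 1/2 * qD q (\<lambda>y. U (q * y) * U y) x
         + 1 / (4 * \<nu>) * (U (q^2 * x) - U x) * U (q * x) * U x"
proof -
  define c where "c = (q - 1) * x"
  have c_nz: "c \<noteq> 0" using assms(2,4) by (simp add: c_def)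
  have scale: "(q - 1) * (q * x) = q * c" "(q - 1) * (q * (q * x)) = q * (q * c)"
    by (simp_all add: c_def algebra_simps)
  have q2: "q^2 * x = q * (q * x)" by (simp add: power2_eq_square)
  define a0 where "a0 = f x"
  define a1 where "a1 = f (q * x)"
  define a2 where "a2 = f (q * (q * x))"
  define a3 where "a3 = f (q * (q * (q * x)))"
  have "q * x \<noteq> 0" "q * (q * x) \<noteq> 0" "q * (q * (q * x)) \<noteq> 0"
    using assms(1,4) by auto
  then have "a0 \<noteq> 0" "a1 \<noteq> 0" "a2 \<noteq> 0" "a3 \<noteq> 0"
    using f_nz assms(4) by (auto simp: a0_def a1_def a2_def a3_def)
  \<comment> \<open>Naming the four values keeps \<open>field_simps\<close> from rewriting inside the arguments of \<open>f\<close>.\<close>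
  with c_nz assms(1,3) show ?thesis
    unfolding U_def qD_def q2 scale c_def[symmetric]
    unfolding a0_def[symmetric] a1_def[symmetric] a2_def[symmetric] a3_def[symmetric]
    by (simp add: field_simps power2_eq_square)
qed

theorem mainTheorem12:
  fixes q \<nu> :: real and \<phi> u :: "real \<Rightarrow> real \<Rightarrow> real"
  assumes q_pos: "q > 0" and q_ne: "q \<noteq> 1" and nu_ne: "\<nu> \<noteq> 0"
    and phi_diff: "\<And>x t. x \<noteq> 0 \<Longrightarrow> (\<lambda>s. \<phi> x s) differentiable (at t)"
    and phi_nz: "\<And>x t. x \<noteq> 0 \<Longrightarrow> \<phi> x t \<noteq> 0"
    and heat: "\<And>x t. x \<noteq> 0 \<Longrightarrow>
        ((\<lambda>s. \<phi> x s) has_real_derivative \<nu> * qD q (qD q (\<lambda>y. \<phi> y t)) x) (at t)"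
    and u_def: "\<And>x t. u x t = - 2 * \<nu> * qD q (\<lambda>y. \<phi> y t) x / \<phi> x t"
    and x_ne: "x \<noteq> 0"
  shows "((\<lambda>s. u x s) has_real_derivative
           (\<nu> * qD q (qD q (\<lambda>y. u y t)) x
            + 1/2 * u x t * (qD q (\<lambda>y. u y t) x - qD q (\<lambda>y. u y t) (q * x))
            - 1/2 * qD q (\<lambda>y. u (q * y) t * u y t) x
            + 1 / (4 * \<nu>) * (u (q^2 * x) t - u x t) * u (q * x) t * u x t)) (at t)"
proof -
  define H where "H y = \<nu> * qD q (qD q (\<lambda>z. \<phi> z t)) y" for y
  have "q \<noteq> 0" "q * x \<noteq> 0" using q_pos x_ne by simp_all
  have "((\<lambda>s. qD q (\<lambda>y. \<phi> y s) x / \<phi> x s) has_real_derivative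
          (qD q H x * \<phi> x t - qD q (\<lambda>y. \<phi> y t) x * H x) / (\<phi> x t)\<^sup>2) (at t)"
    using qD_div_has_real_derivative[OF heat[OF x_ne] heat[OF \<open>q * x \<noteq> 0\<close>] phi_nz[OF x_ne]]
    unfolding H_def .
  from DERIV_cmult[OF this, of "- 2 * \<nu>"]
  have "((\<lambda>s. u x s) has_real_derivative
          - 2 * \<nu> * (qD q H x * \<phi> x t - qD q (\<lambda>y. \<phi> y t) x * H x) / (\<phi> x t)\<^sup>2) (at t)"
    by (simp add: u_def)
  then show ?thesis
    using hopf_cole_q_identity[OF \<open>q \<noteq> 0\<close> q_ne nu_ne x_ne, of "\<lambda>y. \<phi> y t"] phi_nz
    unfolding H_def by (simp add: u_def)
qed

end
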